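(* Let $r_c$, $z_c$, $n_c$ be mutually independent real random variables with $z_c\sim\mathcal{N}(0,\mathsf{Z}_c)$, $n_c\sim\mathcal{N}(0,N_0)$ (where $\mathsf{Z}_c\ge0$, $N_0>0$), and $\mathbb{E}[|r_c|^2]\le\mathsf{R}_c$. Let $Q_c:\mathbb{R}\to\mathfrak{Q}_c$ be a scalar quantizer with $M\ge2$ levels and set $q_c=Q_c(r_c+z_c+n_c)$. Define $\mathsf{SINR}_c=\mathsf{R}_c/(\mathsf{Z}_c+N_0)$. Then $$ I(q_c;\,r_c\mid z_c+n_c)\;\le\;\bar{\iota}(M,\mathsf{SINR}_c). $$
   Context: A scalar quantizer with $M$ levels is a map $Q:\mathbb{R}\to\mathfrak{Q}$ with $|\mathfrak{Q}|=M$ that partitions $\mathbb{R}$ into $M$ intervals separated by at most $M-1$ boundary points and maps each interval to a distinct level (it may be non-uniform). Logarithms are base 2. $H_b(x)=-x\log x-(1-x)\log(1-x)$ is the binary entropy function and $\bar H_b(x)=H_b(\min\{x,1/2\})$. $\mathrm{erf}(x)=\frac{2}{\sqrt{\pi}}\int_0^x e^{-t^2}dt$ and $\mathrm{erfc}=1-\mathrm{erf}$. Define $$\bar f(M,\mathsf{SINR})=\mathrm{erf}\Big(\tfrac{(M-1)\sqrt{\mathsf{SINR}}}{\sqrt2}\Big)+\sqrt{\tfrac{2}{\pi}}(M-1)\sqrt{\mathsf{SINR}}\exp\Big(-\tfrac{(M-1)^2\mathsf{SINR}}{2}\Big)-(M-1)^2\,\mathsf{SINR}\,\mathrm{erfc}\Big(\tfrac{(M-1)\sqrt{\mathsf{SINR}}}{\sqrt2}\Big)$$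 and $$\bar\iota(M,\mathsf{SINR})=\min\Big\{\log M,\ \bar H_b\big(\bar f(M,\mathsf{SINR})\big)+\bar f(M,\mathsf{SINR})\log(M-1)\Big\}.$$ *)

theory Defs
  imports "HOL-Probability.Probability"
begin

definition erf :: "real \<Rightarrow> real" where
  "erf x = 2 / sqrt pi * (LBINT t=0..x. exp (- (t\<^sup>2)))"

definition erfc :: "real \<Rightarrow> real" where
  "erfc x = 1 - erf x"

definition Hb :: "real \<Rightarrow> real" where
  "Hb x = - x * log 2 x - (1 - x) * log 2 (1 - x)"

definition Hb_bar :: "real \<Rightarrow> real" where
  "Hb_bar x = Hb (min x (1/2))"

definition f_bar :: "nat \<Rightarrow> real \<Rightarrow> real" where
  "f_bar L s =
     erf ((real L - 1) * sqrt s / sqrt 2)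
     + sqrt (2 / pi) * (real L - 1) * sqrt s * exp (- ((real L - 1)\<^sup>2 * s / 2))
     - (real L - 1)\<^sup>2 * s * erfc ((real L - 1) * sqrt s / sqrt 2)"

definition iota_bar :: "nat \<Rightarrow> real \<Rightarrow> real" where
  "iota_bar L s = min (log 2 (real L))
      (Hb_bar (f_bar L s) + f_bar L s * log 2 (real L - 1))"

definition scalar_quantizer :: "(real \<Rightarrow> 'q) \<Rightarrow> nat \<Rightarrow> bool" where
  "scalar_quantizer Q L \<longleftrightarrow> finite (range Q) \<and> card (range Q) = L \<and>
     (\<forall>y\<in>range Q. is_interval (Q -` {y}))"

definition centered_gaussian :: "'a measure \<Rightarrow> ('a \<Rightarrow> real) \<Rightarrow> real \<Rightarrow> bool" where
  "centered_gaussian M X v \<longleftrightarrow> X \<in> borel_measurable M \<and>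
     distr M borel X = (if v = 0 then return borel 0
                        else density lborel (normal_density 0 (sqrt v)))"

end

theory Submission
  imports Defs
begin

text \<open>
  Put \<open>s = z + n\<close>, a centred Gaussian of variance \<open>\<sigma>\<^sup>2 = Zc + N0\<close> independent of \<open>r\<close>.
  As \<open>q = Q (r + s)\<close> is a function of \<open>(r, s)\<close>, \<open>I(q; r | s) = H(q | s)\<close> is the mean over
  \<open>s = y\<close> of the entropy of the law of \<open>Q (r + y)\<close>. This entropy is at most \<open>log L\<close> and, by
  Fano's inequality, at most \<open>Hb e + e log (L - 1)\<close> with \<open>e = P (Q (r + y) \<noteq> Q y)\<close>; as
  the Fano bound grows with \<open>e\<close>, it remains to bound the mean error.
  For fixed \<open>x\<close> the set of \<open>y\<close> with \<open>Q (x + y) \<noteq> Q y\<close> lies within \<open>|x|\<close> of one of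
  the at most \<open>L - 1\<close> finite cell endpoints, so its Lebesgue measure is at most \<open>(L - 1) |x|\<close>. Since
  the Gaussian density is largest on \<open>[-a, a]\<close>, a set \<open>A\<close> has Gaussian measure at most
  that of \<open>[-a, a]\<close> plus \<open>\<phi> a (|A| - 2 a)\<close>; averaging over \<open>x = r\<close> with
  \<open>E |r| \<le> sqrt Rc\<close> and taking \<open>a = (L - 1) sqrt Rc / 2\<close> bounds the mean error by
  \<open>erf (a / (\<sigma> sqrt 2))\<close>, which a Mills-ratio estimate bounds by \<open>f_bar L SINR\<close>.
\<close>

section \<open>Entropy of finite distributions\<close>

definition shannon_entropy :: "'k set \<Rightarrow> ('k \<Rightarrow> real) \<Rightarrow> real" where
  "shannon_entropy K p = (\<Sum>k\<in>K. - p k * log 2 (p k))"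

lemma gibbs_term_le:
  fixes p w :: real
  assumes "0 \<le> p" "0 < w"
  shows "p * log 2 w - p * log 2 p \<le> (w - p) / ln 2"
proof (cases "p = 0")
  case False
  then have p: "p > 0" using assms by simp
  have "p * ln (w / p) \<le> p * (w / p - 1)"
    using p assms by (intro mult_left_mono ln_le_minus_one) auto
  also have "\<dots> = w - p" using p by (simp add: field_simps)
  finally have "p * ln w - p * ln p \<le> w - p" using p assms by (simp add: ln_div algebra_simps)
  moreover have "p * log 2 w - p * log 2 p = (p * ln w - p * ln p) / ln 2"
    by (simp add: log_def field_simps)
  ultimately show ?thesis by (simp add: divide_right_mono)
qed (use assms in simp)

lemma shannon_entropy_le_cross_entropy:
  assumes "finite K" and p_nonneg: "\<And>k. k \<in> K \<Longrightarrow> 0 \<le> p k" and p_sum: "(\<Sum>k\<in>K. p k) = 1"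
    and w_pos: "\<And>k. k \<in> K \<Longrightarrow> 0 < w k" and w_sum: "(\<Sum>k\<in>K. w k) \<le> 1"
  shows "shannon_entropy K p \<le> (\<Sum>k\<in>K. - p k * log 2 (w k))"
proof -
  have "(\<Sum>k\<in>K. p k * log 2 (w k) - p k * log 2 (p k)) \<le> (\<Sum>k\<in>K. (w k - p k) / ln 2)"
    by (intro sum_mono gibbs_term_le p_nonneg w_pos)
  also have "\<dots> = ((\<Sum>k\<in>K. w k) - 1) / ln 2"
    using p_sum by (simp add: sum_divide_distrib[symmetric] sum_subtractf)
  also have "\<dots> \<le> 0"
    using w_sum by (simp add: divide_nonpos_pos)
  finally show ?thesis
    unfolding shannon_entropy_def by (simp add: sum_subtractf sum_negf)
qed

lemma shannon_entropy_le_log_card: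
  assumes "finite K" "K \<noteq> {}" "\<And>k. k \<in> K \<Longrightarrow> 0 \<le> p k" and p_sum: "(\<Sum>k\<in>K. p k) = 1"
  shows "shannon_entropy K p \<le> log 2 (card K)"
proof -
  have card: "real (card K) > 0" using assms by auto
  have "shannon_entropy K p \<le> (\<Sum>k\<in>K. - p k * log 2 (1 / card K))"
    using assms card by (intro shannon_entropy_le_cross_entropy) auto
  also have "\<dots> = (\<Sum>k\<in>K. p k) * log 2 (card K)"
    using card by (simp add: sum_distrib_right log_divide)
  finally show ?thesis using p_sum by simp
qed

lemma shannon_entropy_fano:
  assumes "finite K" and k0: "k0 \<in> K" and L: "card K = L" "L \<ge> 2"
    and p_nonneg: "\<And>k. k \<in> K \<Longrightarrow> 0 \<le> p k" and p_sum: "(\<Sum>k\<in>K. p k) = 1"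
    and g: "0 < g" "g < 1"
  shows "shannon_entropy K p \<le> - p k0 * log 2 (1 - g) - (1 - p k0) * log 2 (g / (real L - 1))"
proof -
  define w where "w k = (if k = k0 then 1 - g else g / (real L - 1))" for k
  have L1: "real L - 1 > 0" using L by simp
  have "card (K - {k0}) = L - 1" using assms by simp
  then have "(\<Sum>k\<in>K. w k) = 1"
    using assms L1 by (simp add: sum.remove[of K k0] w_def of_nat_diff)
  then have "shannon_entropy K p \<le> (\<Sum>k\<in>K. - p k * log 2 (w k))"
    using L1 g by (intro shannon_entropy_le_cross_entropy assms) (auto simp: w_def)
  also have "\<dots> = - p k0 * log 2 (1 - g) - (\<Sum>k\<in>K - {k0}. p k) * log 2 (g / (real L - 1))"
    using assms by (simp add: sum.remove[of K k0] w_def sum_negf sum_distrib_right)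
  also have "(\<Sum>k\<in>K - {k0}. p k) = 1 - p k0"
    using assms by (simp add: sum.remove[of K k0])
  finally show ?thesis .
qed

lemma abs_mult_log_le:
  fixes x b :: real
  assumes b: "1 < b" and x: "0 \<le> x" "x \<le> B"
  shows "\<bar>x * log b x\<bar> \<le> (1 + B\<^sup>2) / ln b"
proof (cases "x = 0")
  case False
  then have x_pos: "x > 0" using x by simp
  have upper: "x * ln x \<le> x * (x - 1)"
    using x_pos by (intro mult_left_mono ln_le_minus_one) auto
  have "x * (- ln x) \<le> x * (1 / x - 1)"
    using x_pos ln_le_minus_one[of "1 / x"] by (intro mult_left_mono) (auto simp: ln_div)
  also have "\<dots> = 1 - x" using x_pos by (simp add: field_simps)
  finally have lower: "- (x * ln x) \<le> 1 - x" by simp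
  have quad: "x * (x - 1) \<le> B\<^sup>2 - x"
    using x power_mono[of x B 2] by (simp add: power2_eq_square algebra_simps)
  then have "\<bar>x * ln x\<bar> \<le> 1 + B\<^sup>2"
    using upper lower quad x_pos zero_le_power2[of B] by (intro abs_leI) linarith+
  moreover have "\<bar>x * log b x\<bar> = \<bar>x * ln x\<bar> / ln b"
    using b by (simp add: log_def abs_mult abs_divide)
  ultimately show ?thesis using b by (simp add: divide_right_mono)
qed (use b in \<open>simp add: add_pos_nonneg\<close>)

section \<open>Mutual information with a finitely-valued random variable\<close>

context prob_space
begin

lemma nn_integral_finite_valued:
  assumes "finite K" "\<And>\<omega>. q \<omega> \<in> K" and [measurable]: "q \<in> measurable M (count_space UNIV)"
  shows "(\<integral>\<^sup>+\<omega>. G (q \<omega>) \<partial>M) = (\<Sum>k\<in>K. emeasure M {\<omega>\<in>space M. q \<omega> = k} * G k)"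
proof -
  have "(\<integral>\<^sup>+\<omega>. G (q \<omega>) \<partial>M) = (\<integral>\<^sup>+\<omega>. (\<Sum>k\<in>K. G k * indicator {\<omega>\<in>space M. q \<omega> = k} \<omega>) \<partial>M)"
    using assms(1,2) by (intro nn_integral_cong) (auto simp: indicator_def sum.delta' cong: sum.cong)
  also have "\<dots> = (\<Sum>k\<in>K. emeasure M {\<omega>\<in>space M. q \<omega> = k} * G k)"
    by (subst nn_integral_sum) (auto simp: nn_integral_cmult_indicator mult.commute)
  finally show ?thesis .
qed

lemma integral_finite_valued:
  fixes G :: "'q \<Rightarrow> real"
  assumes "finite K" "\<And>\<omega>. q \<omega> \<in> K" and [measurable]: "q \<in> measurable M (count_space UNIV)"
  shows "(\<integral>\<omega>. G (q \<omega>) \<partial>M) = (\<Sum>k\<in>K. prob {\<omega>\<in>space M. q \<omega> = k} * G k)"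
proof -
  have "(\<integral>\<omega>. G (q \<omega>) \<partial>M) = (\<integral>\<omega>. (\<Sum>k\<in>K. G k * indicator {\<omega>\<in>space M. q \<omega> = k} \<omega>) \<partial>M)"
    using assms(1,2) by (intro Bochner_Integration.integral_cong) (auto simp: indicator_def sum.delta' cong: sum.cong)
  also have "\<dots> = (\<Sum>k\<in>K. prob {\<omega>\<in>space M. q \<omega> = k} * G k)"
    by (subst Bochner_Integration.integral_sum)
      (auto simp: mult.commute less_top[symmetric] intro!: integrable_real_indicator)
  finally show ?thesis .
qed

lemma nn_integral_pair_distr_finite_valued:
  assumes "finite K" "\<And>\<omega>. q \<omega> \<in> K" and [measurable]: "q \<in> measurable M (count_space UNIV)"
    and "sigma_finite_measure N"
    and [measurable]: "F \<in> borel_measurable (count_space UNIV \<Otimes>\<^sub>M N)"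
  shows "(\<integral>\<^sup>+z. F z \<partial>(distr M (count_space UNIV) q \<Otimes>\<^sub>M N)) =
    (\<Sum>k\<in>K. emeasure M {\<omega>\<in>space M. q \<omega> = k} * (\<integral>\<^sup>+y. F (k, y) \<partial>N))"
proof -
  interpret N: sigma_finite_measure N by fact
  have "sets (distr M (count_space UNIV) q \<Otimes>\<^sub>M N) = sets (count_space UNIV \<Otimes>\<^sub>M N)"
    by (intro sets_pair_measure_cong) auto
  then have "(\<integral>\<^sup>+z. F z \<partial>(distr M (count_space UNIV) q \<Otimes>\<^sub>M N)) =
      (\<integral>\<^sup>+k. (\<integral>\<^sup>+y. F (k, y) \<partial>N) \<partial>distr M (count_space UNIV) q)"
    by (intro N.nn_integral_fst[symmetric]) (simp cong: measurable_cong_sets)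
  also have "\<dots> = (\<integral>\<^sup>+\<omega>. (\<integral>\<^sup>+y. F (q \<omega>, y) \<partial>N) \<partial>M)"
    by (subst nn_integral_distr) auto
  finally show ?thesis using nn_integral_finite_valued[OF assms(1-3)] by simp
qed

lemma integral_pair_distr_finite_valued:
  fixes F :: "'q \<times> 'y \<Rightarrow> real"
  assumes "finite K" "\<And>\<omega>. q \<omega> \<in> K" and [measurable]: "q \<in> measurable M (count_space UNIV)"
    and "prob_space N"
    and "integrable (distr M (count_space UNIV) q \<Otimes>\<^sub>M N) F"
  shows "(\<integral>z. F z \<partial>(distr M (count_space UNIV) q \<Otimes>\<^sub>M N)) =
    (\<Sum>k\<in>K. prob {\<omega>\<in>space M. q \<omega> = k} * (\<integral>y. F (k, y) \<partial>N))"
proof -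
  interpret N: prob_space N by fact
  interpret Pq: prob_space "distr M (count_space UNIV) q" by (rule prob_space_distr) simp
  interpret pair_sigma_finite "distr M (count_space UNIV) q" N ..
  have "(\<integral>z. F z \<partial>(distr M (count_space UNIV) q \<Otimes>\<^sub>M N)) =
      (\<integral>k. (\<integral>y. F (k, y) \<partial>N) \<partial>distr M (count_space UNIV) q)"
    by (rule integral_fst'[symmetric]) fact
  also have "\<dots> = (\<integral>\<omega>. (\<integral>y. F (q \<omega>, y) \<partial>N) \<partial>M)"
    by (subst integral_distr) auto
  finally show ?thesis using integral_finite_valued[OF assms(1-3)] by simp
qed

end

text \<open>\<open>H k y\<close> is a version of the conditional probability \<open>P(q = k | Y = y)\<close>.\<close>

locale finite_conditional_kernel = prob_space M for M :: "'a measure" +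
  fixes q :: "'a \<Rightarrow> 'q" and Y :: "'a \<Rightarrow> 'y" and T :: "'y measure"
    and K :: "'q set" and H :: "'q \<Rightarrow> 'y \<Rightarrow> real"
  assumes finite_K: "finite K" and q_in_K: "\<And>\<omega>. q \<omega> \<in> K"
    and measurable_q[measurable]: "q \<in> measurable M (count_space UNIV)"
    and measurable_Y[measurable]: "Y \<in> measurable M T"
    and measurable_H: "\<And>k. k \<in> K \<Longrightarrow> H k \<in> borel_measurable T"
    and H_nonneg: "\<And>k y. k \<in> K \<Longrightarrow> y \<in> space T \<Longrightarrow> 0 \<le> H k y"
    and H_le_1: "\<And>k y. k \<in> K \<Longrightarrow> y \<in> space T \<Longrightarrow> H k y \<le> 1"
    and emeasure_joint: "\<And>C. C \<in> sets (count_space UNIV \<Otimes>\<^sub>M T) \<Longrightarrow>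
       emeasure M ((\<lambda>\<omega>. (q \<omega>, Y \<omega>)) -` C \<inter> space M) =
         (\<Sum>k\<in>K. \<integral>\<^sup>+y. H k y * indicator C (k, y) \<partial>distr M T Y)"
begin

abbreviation "N \<equiv> distr M T Y"

sublocale N: prob_space N
  by (rule prob_space_distr) simp

abbreviation "p k \<equiv> prob {\<omega>\<in>space M. q \<omega> = k}"

lemma integrable_H: "k \<in> K \<Longrightarrow> integrable N (H k)"
  by (rule N.integrable_const_bound[where B=1])
    (auto simp: H_nonneg H_le_1 measurable_H intro!: AE_I2)

lemma nn_integral_H: "k \<in> K \<Longrightarrow> (\<integral>\<^sup>+y. H k y \<partial>N) = ennreal (\<integral>y. H k y \<partial>N)"
  by (intro nn_integral_eq_integral integrable_H) (auto simp: H_nonneg intro!: AE_I2)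

lemma prob_eq_integral_H:
  assumes k: "k \<in> K"
  shows "p k = (\<integral>y. H k y \<partial>N)"
proof -
  have C: "{k} \<times> space T \<in> sets (count_space UNIV \<Otimes>\<^sub>M T)" by (intro pair_measureI) auto
  have "(\<lambda>\<omega>. (q \<omega>, Y \<omega>)) -` ({k} \<times> space T) \<inter> space M = {\<omega>\<in>space M. q \<omega> = k}"
    using measurable_space[OF measurable_Y] by auto
  then have "emeasure M {\<omega>\<in>space M. q \<omega> = k} = (\<Sum>j\<in>K. \<integral>\<^sup>+y. H j y * indicator ({k} \<times> space T) (j, y) \<partial>N)"
    using emeasure_joint[OF C] by simp
  also have "\<dots> = (\<Sum>j\<in>K. if j = k then (\<integral>\<^sup>+y. H k y \<partial>N) else 0)"
    by (intro sum.cong refl) (auto intro!: nn_integral_cong simp: indicator_def)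
  also have "\<dots> = ennreal (\<integral>y. H k y \<partial>N)"
    using finite_K k by (simp add: nn_integral_H)
  moreover have "0 \<le> (\<integral>y. H k y \<partial>N)"
    using k by (intro Bochner_Integration.integral_nonneg) (simp add: H_nonneg)
  ultimately show ?thesis by (simp add: emeasure_eq_measure)
qed

text \<open>The density of the joint law of \<open>(q, Y)\<close> with respect to the product of the marginals;
  where \<open>p k = 0\<close>, \<open>H k\<close> vanishes almost everywhere and the junk quotient \<open>H k y / 0 = 0\<close> is harmless.\<close>

definition joint_density :: "'q \<times> 'y \<Rightarrow> real" where
  "joint_density z = (\<Sum>j\<in>K. indicator {j} (fst z) * (H j (snd z) / p j))"

lemma joint_density_in_K:
  assumes "k \<in> K"
  shows "joint_density (k, y) = H k y / p k"
proof -
  have "joint_density (k, y) = (\<Sum>j\<in>K. if j = k then H k y / p k else 0)"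
    unfolding joint_density_def by (intro sum.cong) (auto simp: indicator_def)
  then show ?thesis using finite_K assms by simp
qed

lemma joint_density_notin_K: "k \<notin> K \<Longrightarrow> joint_density (k, y) = 0"
  by (auto simp: joint_density_def indicator_def intro!: sum.neutral)

lemma measurable_joint_density[measurable]:
  "joint_density \<in> borel_measurable (count_space UNIV \<Otimes>\<^sub>M T)"
  unfolding joint_density_def
  by (intro borel_measurable_sum borel_measurable_times borel_measurable_divide measurable_const
      measurable_compose[OF measurable_snd measurable_H] measurable_compose[OF measurable_fst]) auto

lemma joint_density_bounds:
  assumes "y \<in> space T"
  shows "0 \<le> joint_density (k, y)" "joint_density (k, y) \<le> (\<Sum>j\<in>K. 1 / p j)"
proof -
  show "0 \<le> joint_density (k, y)"
    using assms H_nonneg by (auto simp: joint_density_def intro!: sum_nonneg)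
  show "joint_density (k, y) \<le> (\<Sum>j\<in>K. 1 / p j)"
  proof (cases "k \<in> K")
    case True
    then have "joint_density (k, y) \<le> 1 / p k"
      using assms H_le_1 by (simp add: joint_density_in_K divide_right_mono)
    also have "\<dots> \<le> (\<Sum>j\<in>K. 1 / p j)"
      using finite_K True by (intro member_le_sum) auto
    finally show ?thesis .
  qed (simp add: joint_density_notin_K sum_nonneg)
qed

lemma sets_pair_distr_q_N:
  "sets (distr M (count_space UNIV) q \<Otimes>\<^sub>M N) = sets (count_space UNIV \<Otimes>\<^sub>M T)"
  by (intro sets_pair_measure_cong) auto

lemma emeasure_kernel_slice:
  assumes k: "k \<in> K" and C: "C \<in> sets (count_space UNIV \<Otimes>\<^sub>M T)"
  shows "emeasure M {\<omega>\<in>space M. q \<omega> = k} * (\<integral>\<^sup>+y. joint_density (k, y) * indicator C (k, y) \<partial>N) =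
    (\<integral>\<^sup>+y. H k y * indicator C (k, y) \<partial>N)"
proof (cases "p k = 0")
  case True
  have "(\<integral>\<^sup>+y. H k y * indicator C (k, y) \<partial>N) \<le> (\<integral>\<^sup>+y. H k y \<partial>N)"
    by (intro nn_integral_mono) (auto split: split_indicator)
  also have "\<dots> = 0"
    using True k by (simp add: nn_integral_H prob_eq_integral_H)
  finally show ?thesis using True by (simp add: emeasure_eq_measure)
next
  case False
  then have pk: "p k > 0" by (simp add: zero_less_measure_iff)
  have "emeasure M {\<omega>\<in>space M. q \<omega> = k} * (\<integral>\<^sup>+y. joint_density (k, y) * indicator C (k, y) \<partial>N) =
      (\<integral>\<^sup>+y. ennreal (p k) * ennreal (joint_density (k, y) * indicator C (k, y)) \<partial>N)"
    using C by (simp add: emeasure_eq_measure nn_integral_cmult)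
  also have "\<dots> = (\<integral>\<^sup>+y. H k y * indicator C (k, y) \<partial>N)"
    using pk k H_nonneg
    by (intro nn_integral_cong) (simp add: joint_density_in_K ennreal_mult[symmetric] split: split_indicator)
  finally show ?thesis .
qed

lemma distr_joint_eq_density:
  "distr M (count_space UNIV \<Otimes>\<^sub>M T) (\<lambda>\<omega>. (q \<omega>, Y \<omega>)) =
    density (distr M (count_space UNIV) q \<Otimes>\<^sub>M N) joint_density"
proof (rule measure_eqI)
  fix C assume "C \<in> sets (distr M (count_space UNIV \<Otimes>\<^sub>M T) (\<lambda>\<omega>. (q \<omega>, Y \<omega>)))"
  then have C[measurable]: "C \<in> sets (count_space UNIV \<Otimes>\<^sub>M T)" by simp
  have "emeasure (density (distr M (count_space UNIV) q \<Otimes>\<^sub>M N) joint_density) C =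
      (\<integral>\<^sup>+z. joint_density z * indicator C z \<partial>(distr M (count_space UNIV) q \<Otimes>\<^sub>M N))"
    using sets_pair_distr_q_N
    by (simp add: emeasure_density nn_integral_set_ennreal cong: measurable_cong_sets)
  also have "\<dots> = (\<Sum>k\<in>K. emeasure M {\<omega>\<in>space M. q \<omega> = k} *
      (\<integral>\<^sup>+y. joint_density (k, y) * indicator C (k, y) \<partial>N))"
    by (intro nn_integral_pair_distr_finite_valued finite_K q_in_K measurable_q N.sigma_finite_measure)
      (simp cong: measurable_cong_sets[OF sets_pair_measure_cong[OF refl sets_distr]])
  also have "\<dots> = (\<Sum>k\<in>K. \<integral>\<^sup>+y. H k y * indicator C (k, y) \<partial>N)"
    using C by (intro sum.cong refl emeasure_kernel_slice)
  also have "\<dots> = emeasure (distr M (count_space UNIV \<Otimes>\<^sub>M T) (\<lambda>\<omega>. (q \<omega>, Y \<omega>))) C"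
    using C by (simp add: emeasure_joint emeasure_distr)
  finally show "emeasure (distr M (count_space UNIV \<Otimes>\<^sub>M T) (\<lambda>\<omega>. (q \<omega>, Y \<omega>))) C =
      emeasure (density (distr M (count_space UNIV) q \<Otimes>\<^sub>M N) joint_density) C" ..
qed (simp add: sets_pair_distr_q_N)

lemma integral_joint_density_log_slice:
  assumes b: "1 < b" and k: "k \<in> K"
  shows "p k * (\<integral>y. joint_density (k, y) * log b (joint_density (k, y)) \<partial>N) =
    (\<integral>y. H k y * log b (H k y) \<partial>N) - p k * log b (p k)"
proof (cases "p k = 0")
  case True
  note [measurable] = measurable_H[OF k]
  have "AE y in N. H k y = 0"
    using True k by (subst integral_nonneg_eq_0_iff_AE[symmetric])
      (auto simp: prob_eq_integral_H integrable_H H_nonneg measurable_H intro!: AE_I2)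
  then have "(\<integral>y. H k y * log b (H k y) \<partial>N) = 0"
    by (subst integral_cong_AE[where g="\<lambda>_. 0"]) auto
  then show ?thesis using True by simp
next
  case False
  then have pk: "p k > 0" by (simp add: zero_less_measure_iff)
  have HlogH: "integrable N (\<lambda>y. H k y * log b (H k y))"
    by (rule N.integrable_const_bound[where B="(1 + 1\<^sup>2) / ln b"])
      (use abs_mult_log_le[OF b H_nonneg[OF k] H_le_1[OF k]] k measurable_H in auto)
  have "p k * (\<integral>y. joint_density (k, y) * log b (joint_density (k, y)) \<partial>N) =
      (\<integral>y. H k y * log b (H k y) - H k y * log b (p k) \<partial>N)"
  proof (subst integral_mult_right_zero[symmetric], intro Bochner_Integration.integral_cong refl)
    fix y assume "y \<in> space N"
    then show "p k * (joint_density (k, y) * log b (joint_density (k, y))) =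
        H k y * log b (H k y) - H k y * log b (p k)"
      using pk b H_nonneg[OF k] k
      by (cases "H k y = 0") (auto simp: joint_density_in_K log_divide algebra_simps)
  qed
  also have "\<dots> = (\<integral>y. H k y * log b (H k y) \<partial>N) - p k * log b (p k)"
    using HlogH k by (simp add: integrable_H prob_eq_integral_H)
  finally show ?thesis .
qed

lemma mutual_information_eq:
  assumes b: "1 < b"
  shows "mutual_information b (count_space UNIV) T q Y =
    (\<Sum>k\<in>K. \<integral>y. H k y * log b (H k y) \<partial>N) - (\<Sum>k\<in>K. p k * log b (p k))"
proof -
  let ?D = "distr M (count_space UNIV) q \<Otimes>\<^sub>M N"
  interpret D: prob_space ?D
    by (intro prob_space_pair prob_space_distr N.prob_space_axioms) simp
  have g[measurable]: "joint_density \<in> borel_measurable ?D"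
    using sets_pair_distr_q_N by (simp cong: measurable_cong_sets)
  have space_D: "space ?D = UNIV \<times> space T"
    by (simp add: space_pair_measure)
  have "mutual_information b (count_space UNIV) T q Y = KL_divergence b ?D (density ?D joint_density)"
    unfolding mutual_information_def distr_joint_eq_density ..
  also have "\<dots> = (\<integral>z. joint_density z * log b (joint_density z) \<partial>?D)"
    by (rule D.KL_density[OF b g]) (auto intro!: AE_I2 joint_density_bounds simp: space_D)
  also have "\<dots> = (\<Sum>k\<in>K. p k * (\<integral>y. joint_density (k, y) * log b (joint_density (k, y)) \<partial>N))"
  proof (rule integral_pair_distr_finite_valued[OF finite_K q_in_K measurable_q N.prob_space_axioms])
    show "integrable ?D (\<lambda>z. joint_density z * log b (joint_density z))"
      by (rule D.integrable_const_bound[where B="(1 + (\<Sum>j\<in>K. 1 / p j)\<^sup>2) / ln b"])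
        (auto intro!: AE_I2 abs_mult_log_le[OF b] joint_density_bounds simp: space_D)
  qed
  also have "\<dots> = (\<Sum>k\<in>K. (\<integral>y. H k y * log b (H k y) \<partial>N) - p k * log b (p k))"
    using b by (intro sum.cong refl integral_joint_density_log_slice)
  finally show ?thesis by (simp add: sum_subtractf)
qed

end

section \<open>The error function and Gaussian measures\<close>

lemma erf_nonneg:
  assumes "0 \<le> x"
  shows "0 \<le> erf x"
proof -
  have "0 \<le> (LBINT t=0..x. exp (- t\<^sup>2))"
    using interval_integral_Icc[of 0 x "\<lambda>t. exp (- t\<^sup>2)"] assms
    by (simp add: zero_ereal_def set_lebesgue_integral_def Bochner_Integration.integral_nonneg)
  then show ?thesis unfolding erf_def by simp
qed

lemma nn_integral_gauss_Icc:
  assumes x: "0 \<le> x"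
  shows "(\<integral>\<^sup>+t. ennreal (exp (- t\<^sup>2)) * indicator {0..x} t \<partial>lborel) = ennreal (erf x * sqrt pi / 2)"
proof -
  have "(LBINT t=0..x. exp (- t\<^sup>2)) = (LBINT t:{0..x}. exp (- t\<^sup>2))"
    using interval_integral_Icc[of 0 x] x by (simp add: zero_ereal_def)
  moreover have "set_integrable lborel {0..x} (\<lambda>t. exp (- t\<^sup>2))"
    by (intro borel_integrable_atLeastAtMost') (intro continuous_intros)
  then have "(\<integral>\<^sup>+t. ennreal (exp (- t\<^sup>2)) * indicator {0..x} t \<partial>lborel) =
      ennreal (LBINT t:{0..x}. exp (- t\<^sup>2))"
    unfolding set_lebesgue_integral_def nn_integral_set_ennreal
    by (subst nn_integral_eq_integral) (simp_all add: mult_ac set_integrable_def)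
  ultimately show ?thesis by (simp add: erf_def)
qed

lemma erf_mono:
  assumes x: "0 \<le> x" and xy: "x \<le> y"
  shows "erf x \<le> erf y"
proof -
  have "ennreal (erf x * sqrt pi / 2) \<le> ennreal (erf y * sqrt pi / 2)"
    using x xy by (simp flip: nn_integral_gauss_Icc add: nn_integral_mono split: split_indicator)
  then show ?thesis
    using erf_nonneg[of y] x xy by (simp add: ennreal_le_iff)
qed

lemma nn_integral_gauss_half_line:
  "(\<integral>\<^sup>+t. ennreal (exp (- t\<^sup>2)) * indicator {0..} t \<partial>lborel) = ennreal (sqrt pi / 2)"
proof -
  have "(\<integral>\<^sup>+t. ennreal (exp (- t\<^sup>2)) * indicator {0..} t \<partial>lborel) =
      (\<integral>\<^sup>+t. ennreal (indicator {0..} t *\<^sub>R exp (- t\<^sup>2)) \<partial>lborel)"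
    by (intro nn_integral_cong) (simp split: split_indicator)
  also have "\<dots> = ennreal (sqrt pi / 2)"
    using gaussian_moment_0 by (subst nn_integral_eq_integral) (auto simp: has_bochner_integral_iff)
  finally show ?thesis .
qed

lemma nn_integral_gauss_tail_le:
  assumes u: "0 < u"
  shows "(\<integral>\<^sup>+t. ennreal (exp (- t\<^sup>2)) * indicator {u..} t \<partial>lborel) \<le> ennreal (exp (- u\<^sup>2) / (2 * u))"
proof -
  have "(\<integral>\<^sup>+t. ennreal (exp (- t\<^sup>2)) * indicator {u..} t \<partial>lborel) \<le>
      (\<integral>\<^sup>+t. ennreal (t * exp (- t\<^sup>2) / u) * indicator {u..} t \<partial>lborel)"
    using u by (intro nn_integral_mono) (auto split: split_indicator intro!: ennreal_leI simp: field_simps)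
  also have "\<dots> = ennreal (0 - (- exp (- u\<^sup>2) / (2 * u)))"
  proof (rule nn_integral_FTC_atLeast[where F="\<lambda>t. - exp (- t\<^sup>2) / (2 * u)" and T=0])
    show "((\<lambda>t. - exp (- t\<^sup>2) / (2 * u)) has_real_derivative t * exp (- t\<^sup>2) / u) (at t)" for t
      using u by (auto intro!: derivative_eq_intros simp: field_simps)
    have "((\<lambda>t. - exp (- t\<^sup>2) / (2 * u)) \<longlongrightarrow> - 0 / (2 * u)) at_top"
      by (intro tendsto_divide tendsto_minus filterlim_compose[OF exp_at_bot]
          filterlim_compose[OF filterlim_uminus_at_bot_at_top]
          filterlim_pow_at_top filterlim_ident tendsto_const) (use u in auto)
    then show "((\<lambda>t. - exp (- t\<^sup>2) / (2 * u)) \<longlongrightarrow> 0) at_top" by simp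
  qed (use u in auto)
  finally show ?thesis by simp
qed

lemma erfc_mills_bound:
  assumes u: "0 < u"
  shows "u * sqrt pi * erfc u \<le> exp (- u\<^sup>2)"
proof -
  have "ennreal (sqrt pi / 2) \<le> (\<integral>\<^sup>+t. ennreal (exp (- t\<^sup>2)) * indicator {0..u} t +
      ennreal (exp (- t\<^sup>2)) * indicator {u..} t \<partial>lborel)"
    unfolding nn_integral_gauss_half_line[symmetric]
    by (intro nn_integral_mono) (auto split: split_indicator)
  also have "\<dots> \<le> ennreal (erf u * sqrt pi / 2) + ennreal (exp (- u\<^sup>2) / (2 * u))"
    using u by (subst nn_integral_add) (auto intro!: add_mono nn_integral_gauss_tail_le simp: nn_integral_gauss_Icc)
  also have "\<dots> = ennreal (erf u * sqrt pi / 2 + exp (- u\<^sup>2) / (2 * u))"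
    using u erf_nonneg[of u] by (intro ennreal_plus[symmetric]) auto
  finally have "sqrt pi / 2 \<le> erf u * sqrt pi / 2 + exp (- u\<^sup>2) / (2 * u)"
    using u erf_nonneg[of u] by (subst (asm) ennreal_le_iff) (auto intro!: add_nonneg_nonneg)
  then show ?thesis
    using u by (simp add: erfc_def field_simps)
qed

lemma normal_density_zero_minus: "normal_density 0 \<sigma> (- x) = normal_density 0 \<sigma> x"
  by (simp add: normal_density_def)

lemma normal_density_zero_antimono:
  assumes "\<bar>x\<bar> \<le> \<bar>y\<bar>" shows "normal_density 0 \<sigma> y \<le> normal_density 0 \<sigma> x"
proof -
  have "x\<^sup>2 \<le> y\<^sup>2" using assms by (simp add: abs_le_square_iff)
  then have "- y\<^sup>2 / (2 * \<sigma>\<^sup>2) \<le> - x\<^sup>2 / (2 * \<sigma>\<^sup>2)"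
    by (intro divide_right_mono) auto
  then show ?thesis unfolding normal_density_def
    by (intro mult_left_mono) auto
qed

lemma nn_integral_normal_density_Icc:
  assumes \<sigma>: "0 < \<sigma>" and a: "0 \<le> a"
  shows "(\<integral>\<^sup>+x. ennreal (normal_density 0 \<sigma> x) * indicator {0..a} x \<partial>lborel) =
    ennreal (erf (a / (\<sigma> * sqrt 2)) / 2)"
proof -
  define c where "c = \<sigma> * sqrt 2"
  have c: "c > 0" using \<sigma> by (simp add: c_def)
  have w: "0 \<le> a / c" using a c by simp
  have "(\<integral>\<^sup>+x. ennreal (normal_density 0 \<sigma> x) * indicator {0..a} x \<partial>lborel) =
      (\<integral>\<^sup>+t. ennreal c * (ennreal (normal_density 0 \<sigma> (c * t)) * indicator {0..a} (c * t)) \<partial>lborel)"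
    using c by (subst nn_integral_real_affine[where c=c and t=0]) (auto simp: nn_integral_cmult)
  also have "\<dots> = (\<integral>\<^sup>+t. ennreal (1 / sqrt pi) * (ennreal (exp (- t\<^sup>2)) * indicator {0..a / c} t) \<partial>lborel)"
  proof (intro nn_integral_cong)
    fix t :: real
    have "c * normal_density 0 \<sigma> (c * t) = 1 / sqrt pi * exp (- t\<^sup>2)"
      using \<sigma> unfolding c_def normal_density_def
      by (simp add: real_sqrt_mult power_mult_distrib field_simps)
    moreover have "c * t \<in> {0..a} \<longleftrightarrow> t \<in> {0..a / c}"
      using c by (auto simp: field_simps zero_le_mult_iff)
    ultimately show "ennreal c * (ennreal (normal_density 0 \<sigma> (c * t)) * indicator {0..a} (c * t)) =
        ennreal (1 / sqrt pi) * (ennreal (exp (- t\<^sup>2)) * indicator {0..a / c} t)"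
      using c by (simp add: ennreal_mult[symmetric] mult.assoc[symmetric] indicator_def)
  qed
  also have "\<dots> = ennreal (1 / sqrt pi) * ennreal (erf (a / c) * sqrt pi / 2)"
    by (subst nn_integral_cmult) (auto simp: nn_integral_gauss_Icc[OF w])
  also have "\<dots> = ennreal (erf (a / c) / 2)"
    using erf_nonneg[OF w] by (simp add: ennreal_mult[symmetric])
  finally show ?thesis by (simp add: c_def)
qed

lemma emeasure_normal_Icc_le_erf:
  assumes \<sigma>: "0 < \<sigma>" and a: "0 \<le> a"
  shows "emeasure (density lborel (normal_density 0 \<sigma>)) {-a..a} \<le> ennreal (erf (a / (\<sigma> * sqrt 2)))"
proof -
  let ?\<phi> = "normal_density 0 \<sigma>"
  have reflect: "(\<integral>\<^sup>+x. ennreal (?\<phi> x) * indicator {-a..0} x \<partial>lborel) =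
      (\<integral>\<^sup>+x. ennreal (?\<phi> x) * indicator {0..a} x \<partial>lborel)"
    by (subst nn_integral_real_affine[where c="-1" and t=0])
      (auto intro!: nn_integral_cong simp: normal_density_zero_minus split: split_indicator)
  have "emeasure (density lborel ?\<phi>) {-a..a} \<le>
      (\<integral>\<^sup>+x. ennreal (?\<phi> x) * indicator {-a..0} x + ennreal (?\<phi> x) * indicator {0..a} x \<partial>lborel)"
    by (auto simp: emeasure_density intro!: nn_integral_mono split: split_indicator)
  also have "\<dots> = ennreal (erf (a / (\<sigma> * sqrt 2)))"
    using erf_nonneg[of "a / (\<sigma> * sqrt 2)"] \<sigma> a
    by (simp add: nn_integral_add reflect nn_integral_normal_density_Icc ennreal_plus[symmetric])
  finally show ?thesis .
qed

lemma emeasure_normal_bathtub_bound: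
  fixes \<sigma> a :: real assumes s: "0 < \<sigma>" and a: "0 \<le> a" and A: "A \<in> sets borel"
  shows "emeasure (density lborel (normal_density 0 \<sigma>)) A + ennreal (normal_density 0 \<sigma> a * (2 * a)) \<le>
    emeasure (density lborel (normal_density 0 \<sigma>)) {-a..a} + ennreal (normal_density 0 \<sigma> a) * emeasure lborel A"
proof -
  let ?\<phi> = "normal_density 0 \<sigma>"
  have pt: "ennreal (?\<phi> x) * indicator A x + ennreal (?\<phi> a) * indicator {-a..a} x \<le>
      ennreal (?\<phi> x) * indicator {-a..a} x + ennreal (?\<phi> a) * indicator A x" for x
  proof (cases "\<bar>x\<bar> \<le> a")
    case True
    then have "?\<phi> a \<le> ?\<phi> x" using a by (intro normal_density_zero_antimono) auto
    then show ?thesis using True by (auto split: split_indicator simp: ennreal_leI)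
  next
    case False
    then have "?\<phi> x \<le> ?\<phi> a" using a by (intro normal_density_zero_antimono) auto
    then show ?thesis using False by (auto split: split_indicator simp: ennreal_leI)
  qed
  have "emeasure (density lborel ?\<phi>) A + ennreal (?\<phi> a * (2 * a)) =
      (\<integral>\<^sup>+x. ennreal (?\<phi> x) * indicator A x \<partial>lborel) + (\<integral>\<^sup>+x. ennreal (?\<phi> a) * indicator {-a..a} x \<partial>lborel)"
    using A a by (simp add: emeasure_density nn_integral_cmult_indicator ennreal_mult)
  also have "\<dots> = (\<integral>\<^sup>+x. ennreal (?\<phi> x) * indicator A x + ennreal (?\<phi> a) * indicator {-a..a} x \<partial>lborel)"
    using A by (intro nn_integral_add[symmetric]) auto
  also have "\<dots> \<le> (\<integral>\<^sup>+x. ennreal (?\<phi> x) * indicator {-a..a} x + ennreal (?\<phi> a) * indicator A x \<partial>lborel)"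
    by (intro nn_integral_mono pt)
  also have "\<dots> = (\<integral>\<^sup>+x. ennreal (?\<phi> x) * indicator {-a..a} x \<partial>lborel) + (\<integral>\<^sup>+x. ennreal (?\<phi> a) * indicator A x \<partial>lborel)"
    using A by (intro nn_integral_add) auto
  also have "\<dots> = emeasure (density lborel ?\<phi>) {-a..a} + ennreal (?\<phi> a) * emeasure lborel A"
    using A by (simp add: emeasure_density nn_integral_cmult_indicator)
  finally show ?thesis .
qed

section \<open>Scalar quantizers\<close>

lemma scalar_quantizerD:
  assumes "scalar_quantizer Q L"
  shows "finite (range Q)" "card (range Q) = L" "is_interval (Q -` {k})"
proof -
  show "finite (range Q)" "card (range Q) = L" using assms unfolding scalar_quantizer_def by auto
  show "is_interval (Q -` {k})"
  proof (cases "k \<in> range Q")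
    case False then have "Q -` {k} = {}" by auto
    then show ?thesis by simp
  qed (use assms in \<open>auto simp: scalar_quantizer_def\<close>)
qed

lemma scalar_quantizer_measurable:
  fixes Q :: "real \<Rightarrow> 'q"
  assumes "scalar_quantizer Q L"
  shows "Q \<in> measurable borel (count_space UNIV)"
proof (rule measurableI)
  fix A :: "'q set" assume "A \<in> sets (count_space UNIV)"
  have "Q -` A \<inter> space borel = (\<Union>k\<in>A \<inter> range Q. Q -` {k})" by auto
  also have "\<dots> \<in> sets borel"
    using scalar_quantizerD[OF assms] by (intro sets.finite_UN real_interval_borel_measurable) auto
  finally show "Q -` A \<inter> space borel \<in> sets borel" .
qed simp

lemma pred_eq_finite_range:
  assumes "finite (range Q)" and [measurable]: "Q \<in> measurable borel (count_space UNIV)"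
    and [measurable]: "f \<in> borel_measurable N" "g \<in> borel_measurable N"
  shows "Measurable.pred N (\<lambda>x. Q (f x) = Q (g x))"
proof -
  have "(\<lambda>x. Q (f x) = Q (g x)) = (\<lambda>x. \<exists>k\<in>range Q. Q (f x) = k \<and> Q (g x) = k)" by auto
  then show ?thesis using assms(1) by (simp only:) measurable
qed

lemma sets_quantizer_shift_disagree:
  fixes Q :: "real \<Rightarrow> 'q"
  assumes "finite (range Q)" "Q \<in> measurable borel (count_space UNIV)"
  shows "{y. Q (x + y) \<noteq> Q y} \<in> sets borel"
proof -
  have "Measurable.pred borel (\<lambda>y. Q (x + y) = Q y)"
    using assms by (intro pred_eq_finite_range) auto
  then show ?thesis
    by (simp add: Measurable.pred_def Collect_neg_eq sets.compl_sets)
qed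

lemma scalar_quantizer_card_bdd_above_cells:
  assumes Q: "scalar_quantizer Q L"
  shows "card {k \<in> range Q. bdd_above (Q -` {k})} < L"
proof -
  have "(\<Union>k\<in>range Q. Q -` {k}) = UNIV" by auto
  moreover have "\<not> bdd_above (UNIV :: real set)"
    by (auto simp: bdd_above_def) (meson gt_ex not_le)
  ultimately have "\<exists>k\<in>range Q. \<not> bdd_above (Q -` {k})"
    using scalar_quantizerD(1)[OF Q] by (metis bdd_above_UN)
  then have "{k \<in> range Q. bdd_above (Q -` {k})} \<subset> range Q" by auto
  then show ?thesis using scalar_quantizerD(1,2)[OF Q] psubset_card_mono by metis
qed

text \<open>If \<open>y\<close> and \<open>x + y\<close> (\<open>x \<ge> 0\<close>) lie in different cells, the cell of \<open>y\<close> is an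
  interval ending below \<open>x + y\<close>, so \<open>y\<close> lies within \<open>x\<close> of its finite upper endpoint.\<close>

lemma scalar_quantizer_shift_disagree_subset:
  assumes Q: "scalar_quantizer Q L" and x: "0 \<le> x"
  shows "{y. Q (x + y) \<noteq> Q y} \<subseteq>
    (\<Union>k\<in>{k \<in> range Q. bdd_above (Q -` {k})}. {Sup (Q -` {k}) - x .. Sup (Q -` {k})})"
proof
  fix y assume "y \<in> {y. Q (x + y) \<noteq> Q y}"
  define C where "C = Q -` {Q y}"
  have "y \<in> C" "x + y \<notin> C" using \<open>y \<in> _\<close> by (auto simp: C_def)
  then have below: "c < x + y" if "c \<in> C" for c
    using that scalar_quantizerD(3)[OF Q] x unfolding is_interval_1 C_def
    by (metis le_add_same_cancel2 linorder_not_le)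
  then have bdd: "bdd_above C" by (auto simp: bdd_above_def intro: less_imp_le)
  have "y \<le> Sup C" using bdd \<open>y \<in> C\<close> by (rule cSup_upper[rotated])
  moreover have "Sup C \<le> x + y"
    using \<open>y \<in> C\<close> below by (intro cSup_least) (auto intro: less_imp_le)
  ultimately show "y \<in> (\<Union>k\<in>{k \<in> range Q. bdd_above (Q -` {k})}. {Sup (Q -` {k}) - x .. Sup (Q -` {k})})"
    using bdd unfolding C_def by auto
qed

lemma emeasure_quantizer_shift_disagree_nonneg:
  assumes Q: "scalar_quantizer Q L" and x: "0 \<le> x"
  shows "emeasure lborel {y. Q (x + y) \<noteq> Q y} \<le> ennreal ((real L - 1) * x)"
proof -
  define Kb where "Kb = {k \<in> range Q. bdd_above (Q -` {k})}"
  have fin: "finite Kb" using scalar_quantizerD(1)[OF Q] by (simp add: Kb_def)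
  have "emeasure lborel {y. Q (x + y) \<noteq> Q y} \<le> emeasure lborel (\<Union>k\<in>Kb. {Sup (Q -` {k}) - x .. Sup (Q -` {k})})"
    using fin scalar_quantizer_shift_disagree_subset[OF Q x]
    by (intro emeasure_mono sets.finite_UN) (auto simp: Kb_def)
  also have "\<dots> \<le> (\<Sum>k\<in>Kb. emeasure lborel {Sup (Q -` {k}) - x .. Sup (Q -` {k})})"
    using fin by (intro emeasure_subadditive_finite) auto
  also have "\<dots> = ennreal (real (card Kb) * x)"
    using x by (simp add: ennreal_of_nat_eq_real_of_nat ennreal_mult)
  also have "\<dots> \<le> ennreal ((real L - 1) * x)"
    using scalar_quantizer_card_bdd_above_cells[OF Q] x
    by (intro ennreal_leI mult_right_mono) (auto simp: Kb_def)
  finally show ?thesis .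
qed

lemma emeasure_quantizer_shift_disagree:
  assumes Q: "scalar_quantizer Q L"
  shows "emeasure lborel {y. Q (x + y) \<noteq> Q y} \<le> ennreal ((real L - 1) * \<bar>x\<bar>)"
proof (cases "0 \<le> x")
  case True then show ?thesis using emeasure_quantizer_shift_disagree_nonneg[OF Q True] by simp
next
  case False
  have B: "{t. Q (- x + t) \<noteq> Q t} \<in> sets borel"
    using scalar_quantizerD(1)[OF Q] scalar_quantizer_measurable[OF Q] by (rule sets_quantizer_shift_disagree)
  have "{y. Q (x + y) \<noteq> Q y} = (\<lambda>y. x + y) -` {t. Q (- x + t) \<noteq> Q t} \<inter> space lborel"
    by (auto simp: add.assoc[symmetric])
  then have "emeasure lborel {y. Q (x + y) \<noteq> Q y} = emeasure (distr lborel borel ((+) x)) {t. Q (- x + t) \<noteq> Q t}"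
    using B by (simp add: emeasure_distr)
  also have "\<dots> = emeasure lborel {t. Q (- x + t) \<noteq> Q t}"
    by (simp add: lborel_distr_plus)
  also have "\<dots> \<le> ennreal ((real L - 1) * (- x))"
    using False by (intro emeasure_quantizer_shift_disagree_nonneg[OF Q]) auto
  finally show ?thesis using False by simp
qed

section \<open>Bounds on the mean quantization error and optimisation of Fano's bound\<close>

lemma nn_integral_abs_le_sqrt_second_moment:
  fixes Pr :: "real measure"
  assumes Pr: "prob_space Pr" and sPr: "sets Pr = sets borel" and R: "0 \<le> R"
    and mom: "(\<integral>\<^sup>+x. ennreal (x\<^sup>2) \<partial>Pr) \<le> ennreal R"
  shows "(\<integral>\<^sup>+x. ennreal \<bar>x\<bar> \<partial>Pr) \<le> ennreal (sqrt R)"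
proof -
  interpret Pr: prob_space Pr by fact
  have mx[measurable]: "(\<lambda>x. x) \<in> borel_measurable Pr"
    by (simp add: measurable_cong_sets[OF sPr refl])
  show ?thesis
  proof (cases "R = 0")
    case True
    then have "(\<integral>\<^sup>+x. ennreal (x\<^sup>2) \<partial>Pr) = 0" using mom by simp
    then have "AE x in Pr. ennreal (x\<^sup>2) = 0" by (subst (asm) nn_integral_0_iff_AE) auto
    then have "AE x in Pr. ennreal \<bar>x\<bar> = 0" by eventually_elim simp
    then have "(\<integral>\<^sup>+x. ennreal \<bar>x\<bar> \<partial>Pr) = (\<integral>\<^sup>+x. 0 \<partial>Pr)" by (intro nn_integral_cong_AE) auto
    then show ?thesis by simp
  next
    case False
    then have Rp: "R > 0" using R by simp
    define t where "t = sqrt R"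
    have tp: "t > 0" unfolding t_def using Rp by simp
    have pt: "ennreal \<bar>x\<bar> \<le> ennreal (1 / (2 * t)) * ennreal (x\<^sup>2) + ennreal (t / 2)" for x
    proof -
      have "0 \<le> (\<bar>x\<bar> - t)\<^sup>2" by simp
      then have "\<bar>x\<bar> \<le> 1 / (2 * t) * x\<^sup>2 + t / 2"
        using tp by (simp add: power2_eq_square field_simps)
      then have "ennreal \<bar>x\<bar> \<le> ennreal (1 / (2 * t) * x\<^sup>2 + t / 2)" by (rule ennreal_leI)
      also have "\<dots> = ennreal (1 / (2 * t) * x\<^sup>2) + ennreal (t / 2)"
        using tp by (intro ennreal_plus) auto
      also have "ennreal (1 / (2 * t) * x\<^sup>2) = ennreal (1 / (2 * t)) * ennreal (x\<^sup>2)"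
        using tp by (intro ennreal_mult) auto
      finally show ?thesis .
    qed
    have "(\<integral>\<^sup>+x. ennreal \<bar>x\<bar> \<partial>Pr) \<le> (\<integral>\<^sup>+x. ennreal (1 / (2 * t)) * ennreal (x\<^sup>2) + ennreal (t / 2) \<partial>Pr)"
      by (intro nn_integral_mono pt)
    also have "\<dots> = ennreal (1 / (2 * t)) * (\<integral>\<^sup>+x. ennreal (x\<^sup>2) \<partial>Pr) + ennreal (t / 2)"
      by (subst nn_integral_add) (auto simp: nn_integral_cmult Pr.emeasure_space_1)
    also have "\<dots> \<le> ennreal (1 / (2 * t)) * ennreal R + ennreal (t / 2)"
      by (intro add_mono mult_left_mono mom) auto
    also have "ennreal (1 / (2 * t)) * ennreal R = ennreal (1 / (2 * t) * R)"
      using tp R by (intro ennreal_mult[symmetric]) auto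
    also have "ennreal (1 / (2 * t) * R) + ennreal (t / 2) = ennreal (1 / (2 * t) * R + t / 2)"
      using tp R by (intro ennreal_plus[symmetric]) auto
    also have "1 / (2 * t) * R + t / 2 = sqrt R"
      using tp Rp unfolding t_def by (simp add: field_simps)
    finally show ?thesis .
  qed
qed

lemma nn_integral_normal_shifted_sets_le:
  fixes Pr :: "real measure" and A :: "real \<Rightarrow> real set" and \<sigma> R m :: real
  defines "Ps \<equiv> density lborel (normal_density 0 \<sigma>)"
  assumes Pr: "prob_space Pr" and sPr: "sets Pr = sets borel"
    and s: "0 < \<sigma>" and R: "0 \<le> R" and m: "0 \<le> m"
    and mom: "(\<integral>\<^sup>+x. ennreal (x\<^sup>2) \<partial>Pr) \<le> ennreal R"
    and jump: "\<And>x. emeasure lborel (A x) \<le> ennreal (m * \<bar>x\<bar>)"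
    and Ameas: "\<And>x. A x \<in> sets borel"
    and Am: "(\<lambda>x. emeasure Ps (A x)) \<in> borel_measurable Pr"
  shows "(\<integral>\<^sup>+x. emeasure Ps (A x) \<partial>Pr) \<le> emeasure Ps {-(m * sqrt R / 2) .. m * sqrt R / 2}"
proof -
  interpret Pr: prob_space Pr by fact
  define a where "a = m * sqrt R / 2"
  define \<phi>a where "\<phi>a = normal_density 0 \<sigma> a"
  have a: "0 \<le> a" unfolding a_def using m R by simp
  have \<phi>a: "0 \<le> \<phi>a" unfolding \<phi>a_def by simp
  have mx[measurable]: "(\<lambda>x. x) \<in> borel_measurable Pr"
    by (simp add: measurable_cong_sets[OF sPr refl])
  have pt: "emeasure Ps (A x) + ennreal (\<phi>a * (2 * a)) \<le> emeasure Ps {-a..a} + ennreal (\<phi>a * m) * ennreal \<bar>x\<bar>" for x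
  proof -
    have "emeasure Ps (A x) + ennreal (\<phi>a * (2 * a)) \<le> emeasure Ps {-a..a} + ennreal \<phi>a * emeasure lborel (A x)"
      unfolding Ps_def \<phi>a_def by (rule emeasure_normal_bathtub_bound[OF s a Ameas])
    also have "\<dots> \<le> emeasure Ps {-a..a} + ennreal \<phi>a * ennreal (m * \<bar>x\<bar>)"
      by (intro add_mono mult_left_mono jump) auto
    also have "\<dots> = emeasure Ps {-a..a} + ennreal (\<phi>a * m) * ennreal \<bar>x\<bar>"
      using \<phi>a m by (simp add: ennreal_mult mult.assoc)
    finally show ?thesis .
  qed
  have "(\<integral>\<^sup>+x. emeasure Ps (A x) \<partial>Pr) + ennreal (\<phi>a * (2 * a)) = (\<integral>\<^sup>+x. emeasure Ps (A x) + ennreal (\<phi>a * (2 * a)) \<partial>Pr)"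
    using Am by (subst nn_integral_add) (auto simp: Pr.emeasure_space_1)
  also have "\<dots> \<le> (\<integral>\<^sup>+x. emeasure Ps {-a..a} + ennreal (\<phi>a * m) * ennreal \<bar>x\<bar> \<partial>Pr)"
    by (intro nn_integral_mono pt)
  also have "\<dots> = emeasure Ps {-a..a} + ennreal (\<phi>a * m) * (\<integral>\<^sup>+x. ennreal \<bar>x\<bar> \<partial>Pr)"
    by (subst nn_integral_add) (auto simp: nn_integral_cmult Pr.emeasure_space_1)
  also have "\<dots> \<le> emeasure Ps {-a..a} + ennreal (\<phi>a * m) * ennreal (sqrt R)"
    by (intro add_mono mult_left_mono nn_integral_abs_le_sqrt_second_moment[OF Pr sPr R mom]) auto
  also have "\<dots> = emeasure Ps {-a..a} + ennreal (\<phi>a * (2 * a))"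
    using \<phi>a m R unfolding a_def by (simp add: ennreal_mult[symmetric] mult.assoc)
  finally have "(\<integral>\<^sup>+x. emeasure Ps (A x) \<partial>Pr) + ennreal (\<phi>a * (2 * a)) \<le> emeasure Ps {-a..a} + ennreal (\<phi>a * (2 * a))" .
  then have "ennreal (\<phi>a * (2 * a)) + (\<integral>\<^sup>+x. emeasure Ps (A x) \<partial>Pr) \<le> ennreal (\<phi>a * (2 * a)) + emeasure Ps {-a..a}"
    by (simp add: add.commute)
  then show ?thesis unfolding a_def[symmetric] by (simp add: ennreal_add_left_cancel_le)
qed

lemma erf_le_f_bar:
  fixes s :: real assumes L: "1 \<le> L" and s: "0 \<le> s"
  shows "erf ((real L - 1) * sqrt s / sqrt 2) \<le> f_bar L s"
proof -
  define c where "c = (real L - 1) * sqrt s"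
  define u where "u = c / sqrt 2"
  have c0: "0 \<le> c" unfolding c_def using L s by simp
  have cu: "c = sqrt 2 * u" unfolding u_def by simp
  have c2: "(real L - 1)\<^sup>2 * s = c\<^sup>2" unfolding c_def using s by (simp add: power_mult_distrib)
  have "f_bar L s = erf u + sqrt (2 / pi) * c * exp (- (c\<^sup>2 / 2)) - c\<^sup>2 * erfc u"
    unfolding f_bar_def c2 by (simp add: c_def u_def mult.assoc)
  moreover have "c\<^sup>2 * erfc u \<le> sqrt (2 / pi) * c * exp (- (c\<^sup>2 / 2))"
  proof (cases "c = 0")
    case True then show ?thesis by simp
  next
    case False
    then have up: "u > 0" using c0 unfolding u_def by simp
    have e: "c\<^sup>2 / 2 = u\<^sup>2" unfolding cu by (simp add: power_mult_distrib)
    have "c\<^sup>2 * erfc u = (2 * u / sqrt pi) * (u * sqrt pi * erfc u)"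
      unfolding cu by (simp add: power_mult_distrib power2_eq_square field_simps)
    also have "\<dots> \<le> (2 * u / sqrt pi) * exp (- u\<^sup>2)"
      using up by (intro mult_left_mono erfc_mills_bound) auto
    also have "\<dots> = sqrt (2 / pi) * c * exp (- (c\<^sup>2 / 2))"
      unfolding e unfolding cu by (simp add: real_sqrt_divide field_simps)
    finally show ?thesis .
  qed
  ultimately show ?thesis unfolding u_def c_def by simp
qed

lemma nonpos_if_le_neg_log_one_minus:
  assumes bound: "\<And>g. 0 < g \<Longrightarrow> g \<le> 1/2 \<Longrightarrow> C \<le> - log 2 (1 - g)"
  shows "C \<le> 0"
proof (rule ccontr)
  assume "\<not> C \<le> 0"
  define g where "g = min (1/2) (C * ln 2 / 4)"
  have g: "0 < g" "g \<le> 1/2" "g \<le> C * ln 2 / 4"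
    using \<open>\<not> C \<le> 0\<close> by (auto simp: g_def)
  have "C \<le> ln (1 / (1 - g)) / ln 2"
    using bound[OF g(1,2)] g by (simp add: log_def ln_div)
  also have "\<dots> \<le> (1 / (1 - g) - 1) / ln 2"
    using g by (intro divide_right_mono ln_le_minus_one) auto
  also have "\<dots> \<le> 2 * g / ln 2"
    using g by (intro divide_right_mono) (auto simp: field_simps)
  also have "\<dots> \<le> C / 2"
    using g by (simp add: field_simps)
  finally show False using \<open>\<not> C \<le> 0\<close> by simp
qed

text \<open>The bound is nondecreasing in the error \<open>e\<close>; at \<open>e = f\<close> and \<open>g = min f (1/2)\<close> it is
  \<open>Hb_bar f + f log(L - 1)\<close> (for \<open>f > 1/2\<close> because \<open>Hb (1/2) = 1\<close>).\<close>

lemma fano_bound_le_Hb_bar: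
  fixes L :: nat
  assumes L: "2 \<le> L" and ef: "e \<le> f" and f: "0 < f"
    and bound: "C \<le> - (1 - e) * log 2 (1 - min f (1/2)) - e * log 2 (min f (1/2) / (real L - 1))"
  shows "C \<le> Hb_bar f + f * log 2 (real L - 1)"
proof -
  define g where "g = min f (1/2)"
  have g: "0 < g" "g \<le> 1/2" using f by (auto simp: g_def)
  have log_L: "0 \<le> log 2 (real L - 1)" using L by simp
  have "(e - g) * (log 2 (1 - g) - log 2 g) \<le> 0"
  proof (cases "g = f")
    case True
    then show ?thesis using ef g by (intro mult_nonpos_nonneg) auto
  next
    case False
    then have "1 - g = g" by (auto simp: g_def)
    then show ?thesis by (simp only:) simp
  qed
  moreover have "(e - f) * log 2 (real L - 1) \<le> 0"
    using ef log_L by (intro mult_nonpos_nonneg) auto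
  moreover have "C \<le> - (1 - e) * log 2 (1 - g) - e * (log 2 g - log 2 (real L - 1))"
    using bound g L by (simp add: g_def[symmetric] log_divide)
  ultimately have "C \<le> - g * log 2 g - (1 - g) * log 2 (1 - g) + f * log 2 (real L - 1)"
    by (simp add: algebra_simps)
  then show ?thesis
    by (simp add: Hb_bar_def Hb_def g_def)
qed

lemma fano_bound_optimize:
  fixes L :: nat
  assumes L: "2 \<le> L" and e: "0 \<le> e" "e \<le> f"
    and bound: "\<And>g. 0 < g \<Longrightarrow> g \<le> 1/2 \<Longrightarrow> C \<le> - (1 - e) * log 2 (1 - g) - e * log 2 (g / (real L - 1))"
    and log_L: "C \<le> log 2 (real L)"
  shows "C \<le> min (log 2 (real L)) (Hb_bar f + f * log 2 (real L - 1))"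
proof (cases "0 < f")
  case True
  then show ?thesis
    using log_L by (auto intro!: fano_bound_le_Hb_bar[OF L e(2)] bound)
next
  case False
  then have "f = 0" "e = 0" using e by auto
  moreover have "C \<le> 0"
    using bound \<open>e = 0\<close> by (intro nonpos_if_le_neg_log_one_minus) simp
  ultimately show ?thesis
    using log_L by (simp add: Hb_bar_def Hb_def)
qed

section \<open>Quantized observation of a signal in independent noise\<close>

lemma (in finite_measure) measurable_measure_Pair:
  "S \<in> sets (N \<Otimes>\<^sub>M M) \<Longrightarrow> (\<lambda>x. measure M (Pair x -` S)) \<in> borel_measurable N"
  unfolding measure_def by (intro borel_measurable_enn2real measurable_emeasure_Pair)

text \<open>For \<open>P\<close> the distribution of \<open>r\<close>, \<open>quantizer_kernel P Q k y\<close> is the probability of the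
  quantizer output \<open>k\<close> given noise value \<open>y\<close>, and \<open>quantizer_error P Q y\<close> the probability
  that the signal moves the output away from \<open>Q y\<close>.\<close>

definition quantizer_kernel :: "real measure \<Rightarrow> (real \<Rightarrow> 'q) \<Rightarrow> 'q \<Rightarrow> real \<Rightarrow> real" where
  "quantizer_kernel P Q k y = measure P {x. Q (x + y) = k}"

definition quantizer_error :: "real measure \<Rightarrow> (real \<Rightarrow> 'q) \<Rightarrow> real \<Rightarrow> real" where
  "quantizer_error P Q y = measure P {x. Q (x + y) \<noteq> Q y}"

context
  fixes P :: "real measure" and Q :: "real \<Rightarrow> 'q"
  assumes P: "prob_space P" "sets P = sets borel"
    and Q_finite: "finite (range Q)" and Q_measurable[measurable]: "Q \<in> measurable borel (count_space UNIV)"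
begin

interpretation P: prob_space P by (fact P(1))

lemma sets_pair_P: "sets (borel \<Otimes>\<^sub>M P) = sets (borel \<Otimes>\<^sub>M borel)" "sets (P \<Otimes>\<^sub>M borel) = sets (borel \<Otimes>\<^sub>M borel)"
  by (auto intro!: sets_pair_measure_cong simp: P(2))

lemma measurable_quantizer_kernel[measurable]: "quantizer_kernel P Q k \<in> borel_measurable borel"
proof -
  have "{v \<in> space (borel \<Otimes>\<^sub>M borel). Q (snd v + fst v) = k} \<in> sets (borel \<Otimes>\<^sub>M P)"
    unfolding sets_pair_P by measurable
  from P.measurable_measure_Pair[OF this] show ?thesis
    by (simp add: quantizer_kernel_def[abs_def] vimage_def space_pair_measure)
qed

lemma measurable_quantizer_error[measurable]: "quantizer_error P Q \<in> borel_measurable borel"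
proof -
  have [measurable]: "Measurable.pred (borel \<Otimes>\<^sub>M borel) (\<lambda>v. Q (snd v + fst v) = Q (fst v))"
    by (intro pred_eq_finite_range Q_finite) auto
  have "{v \<in> space (borel \<Otimes>\<^sub>M borel). Q (snd v + fst v) \<noteq> Q (fst v)} \<in> sets (borel \<Otimes>\<^sub>M P)"
    unfolding sets_pair_P by measurable
  from P.measurable_measure_Pair[OF this] show ?thesis
    by (simp add: quantizer_error_def[abs_def] vimage_def space_pair_measure)
qed

lemma quantizer_kernel_bounds: "0 \<le> quantizer_kernel P Q k y" "quantizer_kernel P Q k y \<le> 1"
  by (simp_all add: quantizer_kernel_def)

lemma sum_quantizer_kernel: "(\<Sum>k\<in>range Q. quantizer_kernel P Q k y) = 1"
proof -
  have "(\<Sum>k\<in>range Q. quantizer_kernel P Q k y) = measure P (\<Union>k\<in>range Q. {x. Q (x + y) = k})"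
    unfolding quantizer_kernel_def using Q_finite
    by (intro P.finite_measure_finite_Union[symmetric]) (auto simp: disjoint_family_on_def P(2))
  also have "(\<Union>k\<in>range Q. {x. Q (x + y) = k}) = space P" by (auto simp: P(2) cong: sets_eq_imp_space_eq)
  finally show ?thesis by (simp add: P.prob_space)
qed

lemma quantizer_kernel_self: "quantizer_kernel P Q (Q y) y = 1 - quantizer_error P Q y"
proof -
  have "{x. Q (x + y) = Q y} \<in> sets P" unfolding P(2) by measurable
  from P.prob_compl[OF this] show ?thesis
    by (simp add: quantizer_kernel_def quantizer_error_def P(2) Collect_neg_eq Compl_eq_Diff_UNIV
        sets_eq_imp_space_eq[OF P(2)])
qed

lemma integrable_quantizer_error:
  assumes "prob_space N" "sets N = sets borel"
  shows "integrable N (quantizer_error P Q)"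
  by (rule finite_measure.integrable_const_bound[where B=1])
    (use assms in \<open>auto simp: quantizer_error_def prob_space_def cong: measurable_cong_sets\<close>)

lemma nn_integral_quantizer_error:
  assumes "prob_space N" "sets N = sets borel"
  shows "(\<integral>\<^sup>+y. quantizer_error P Q y \<partial>N) = (\<integral>\<^sup>+x. emeasure N {y. Q (x + y) \<noteq> Q y} \<partial>P)"
    and "(\<lambda>x. emeasure N {y. Q (x + y) \<noteq> Q y}) \<in> borel_measurable P"
proof -
  interpret N: prob_space N by (fact assms(1))
  interpret PN: pair_prob_space P N ..
  define S where "S = {v \<in> space (borel \<Otimes>\<^sub>M borel). Q (fst v + snd v) \<noteq> Q (snd v)}"
  have "Measurable.pred (borel \<Otimes>\<^sub>M borel) (\<lambda>v. Q (fst v + snd v) = Q (snd v))"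
    by (intro pred_eq_finite_range Q_finite) auto
  then have "S \<in> sets (borel \<Otimes>\<^sub>M borel)"
    unfolding S_def by measurable
  then have S: "S \<in> sets (P \<Otimes>\<^sub>M N)"
    using P(2) assms(2) by (simp add: sets_pair_measure_cong[of P borel N borel])
  have slice1: "(\<lambda>x. (x, y)) -` S = {x. Q (x + y) \<noteq> Q y}" for y
    by (auto simp: S_def space_pair_measure)
  have slice2: "Pair x -` S = {y. Q (x + y) \<noteq> Q y}" for x
    by (auto simp: S_def space_pair_measure)
  have "(\<integral>\<^sup>+y. quantizer_error P Q y \<partial>N) = (\<integral>\<^sup>+y. emeasure P ((\<lambda>x. (x, y)) -` S) \<partial>N)"
    by (simp add: quantizer_error_def slice1 P.emeasure_eq_measure)
  also have "\<dots> = emeasure (P \<Otimes>\<^sub>M N) S"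
    by (rule PN.emeasure_pair_measure_alt2[symmetric, OF S])
  finally show "(\<integral>\<^sup>+y. quantizer_error P Q y \<partial>N) = (\<integral>\<^sup>+x. emeasure N {y. Q (x + y) \<noteq> Q y} \<partial>P)"
    by (simp add: N.emeasure_pair_measure_alt[OF S] slice2)
  show "(\<lambda>x. emeasure N {y. Q (x + y) \<noteq> Q y}) \<in> borel_measurable P"
    using N.measurable_emeasure_Pair[OF S] by (simp add: slice2)
qed

lemma integrable_shannon_entropy_quantizer_kernel:
  assumes N: "prob_space N" "sets N = sets borel"
  shows "integrable N (\<lambda>y. quantizer_kernel P Q k y * log 2 (quantizer_kernel P Q k y))"
    and "integrable N (\<lambda>y. shannon_entropy (range Q) (\<lambda>k. quantizer_kernel P Q k y))"
proof -
  interpret N: prob_space N by (fact N(1))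
  show *: "integrable N (\<lambda>y. quantizer_kernel P Q k y * log 2 (quantizer_kernel P Q k y))" for k
    by (rule N.integrable_const_bound[where B="(1 + 1\<^sup>2) / ln 2"])
      (use N(2) abs_mult_log_le[of 2 "quantizer_kernel P Q k _" 1] quantizer_kernel_bounds in
        \<open>auto cong: measurable_cong_sets\<close>)
  show "integrable N (\<lambda>y. shannon_entropy (range Q) (\<lambda>k. quantizer_kernel P Q k y))"
    unfolding shannon_entropy_def minus_mult_left[symmetric] by (intro Bochner_Integration.integrable_sum integrable_minus *)
qed

end

lemma nn_integral_indicator_comp:
  assumes "f \<in> measurable M N" "C \<in> sets N"
  shows "(\<integral>\<^sup>+x. indicator C (f x) \<partial>M) = emeasure M (f -` C \<inter> space M)"
proof -
  have "(\<integral>\<^sup>+x. indicator C (f x) \<partial>M) = (\<integral>\<^sup>+x. indicator (f -` C \<inter> space M) x \<partial>M)"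
    by (intro nn_integral_cong) (auto split: split_indicator)
  then show ?thesis using assms by (simp add: measurable_sets)
qed

context prob_space
begin

lemma mutual_information_finite_fun:
  fixes \<phi> :: "'b \<Rightarrow> 'q" and V :: "'a \<Rightarrow> 'b"
  assumes b: "1 < b" and K: "finite K" "\<And>v. \<phi> v \<in> K"
    and [measurable]: "\<phi> \<in> measurable T (count_space UNIV)" "V \<in> measurable M T"
  shows "mutual_information b (count_space UNIV) T (\<lambda>\<omega>. \<phi> (V \<omega>)) V =
    - (\<Sum>k\<in>K. prob {\<omega>\<in>space M. \<phi> (V \<omega>) = k} * log b (prob {\<omega>\<in>space M. \<phi> (V \<omega>) = k}))"
proof -
  interpret finite_conditional_kernel M "\<lambda>\<omega>. \<phi> (V \<omega>)" V T K "\<lambda>k v. of_bool (\<phi> v = k)"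
  proof
    fix C :: "('q \<times> 'b) set" assume [measurable]: "C \<in> sets (count_space UNIV \<Otimes>\<^sub>M T)"
    have "(\<Sum>k\<in>K. \<integral>\<^sup>+v. ennreal (of_bool (\<phi> v = k) * indicator C (k, v)) \<partial>distr M T V) =
        (\<integral>\<^sup>+v. (\<Sum>k\<in>K. ennreal (of_bool (\<phi> v = k) * indicator C (k, v))) \<partial>distr M T V)"
      by (rule nn_integral_sum[symmetric]) auto
    also have "\<dots> = (\<integral>\<^sup>+v. indicator C (\<phi> v, v) \<partial>distr M T V)"
    proof (intro nn_integral_cong)
      fix v
      have "(\<Sum>k\<in>K. ennreal (of_bool (\<phi> v = k) * indicator C (k, v))) =
          (\<Sum>k\<in>K. if k = \<phi> v then indicator C (\<phi> v, v) else 0)"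
        by (intro sum.cong) (auto split: split_indicator)
      then show "(\<Sum>k\<in>K. ennreal (of_bool (\<phi> v = k) * indicator C (k, v))) = indicator C (\<phi> v, v)"
        using K by simp
    qed
    also have "\<dots> = (\<integral>\<^sup>+\<omega>. indicator C (\<phi> (V \<omega>), V \<omega>) \<partial>M)"
      by (simp add: nn_integral_distr)
    also have "\<dots> = emeasure M ((\<lambda>\<omega>. (\<phi> (V \<omega>), V \<omega>)) -` C \<inter> space M)"
      by (rule nn_integral_indicator_comp) measurable
    finally show "emeasure M ((\<lambda>\<omega>. (\<phi> (V \<omega>), V \<omega>)) -` C \<inter> space M) =
        (\<Sum>k\<in>K. \<integral>\<^sup>+v. ennreal (of_bool (\<phi> v = k) * indicator C (k, v)) \<partial>distr M T V)" ..
  qed (use K in auto)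
  have "(\<lambda>v. (of_bool (\<phi> v = k) :: real) * log b (of_bool (\<phi> v = k))) = (\<lambda>_. 0)" for k
    by (rule ext) simp
  then show ?thesis unfolding mutual_information_eq[OF b] by simp
qed

lemma mutual_information_quantized_noise:
  fixes Q :: "real \<Rightarrow> 'q"
  assumes [measurable]: "r \<in> borel_measurable M" "s \<in> borel_measurable M"
    and indep: "indep_var borel r borel s"
    and Q_finite: "finite (range Q)" and [measurable]: "Q \<in> measurable borel (count_space UNIV)"
  defines "h \<equiv> quantizer_kernel (distr M borel r) Q"
  shows "mutual_information 2 (count_space UNIV) borel (\<lambda>\<omega>. Q (r \<omega> + s \<omega>)) s =
    (\<Sum>k\<in>range Q. \<integral>y. h k y * log 2 (h k y) \<partial>distr M borel s) -
    (\<Sum>k\<in>range Q. prob {\<omega>\<in>space M. Q (r \<omega> + s \<omega>) = k} * log 2 (prob {\<omega>\<in>space M. Q (r \<omega> + s \<omega>) = k}))"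
proof -
  let ?Pr = "distr M borel r" and ?Ps = "distr M borel s"
  interpret Pr: prob_space ?Pr by (rule prob_space_distr) simp
  interpret Ps: prob_space ?Ps by (rule prob_space_distr) simp
  interpret PP: pair_prob_space ?Pr ?Ps ..
  have joint: "distr M (borel \<Otimes>\<^sub>M borel) (\<lambda>\<omega>. (r \<omega>, s \<omega>)) = ?Pr \<Otimes>\<^sub>M ?Ps"
    using indep by (simp add: indep_var_distribution_eq)
  have h_measurable[measurable]: "h k \<in> borel_measurable borel" for k
    unfolding h_def using Q_finite by (intro measurable_quantizer_kernel Pr.prob_space_axioms) auto
  have h_bounds: "0 \<le> h k y" "h k y \<le> 1" for k y
    unfolding h_def by (simp_all add: quantizer_kernel_def)
  interpret finite_conditional_kernel M "\<lambda>\<omega>. Q (r \<omega> + s \<omega>)" s borel "range Q" h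
  proof
    fix C :: "('q \<times> real) set" assume [measurable]: "C \<in> sets (count_space UNIV \<Otimes>\<^sub>M borel)"
    have "emeasure M ((\<lambda>\<omega>. (Q (r \<omega> + s \<omega>), s \<omega>)) -` C \<inter> space M) =
        (\<integral>\<^sup>+\<omega>. indicator C (Q (r \<omega> + s \<omega>), s \<omega>) \<partial>M)"
      by (rule nn_integral_indicator_comp[symmetric]) measurable
    also have "\<dots> = (\<integral>\<^sup>+v. indicator C (Q (fst v + snd v), snd v) \<partial>(?Pr \<Otimes>\<^sub>M ?Ps))"
      unfolding joint[symmetric] by (simp add: nn_integral_distr)
    also have "\<dots> = (\<integral>\<^sup>+y. (\<integral>\<^sup>+x. indicator C (Q (x + y), y) \<partial>?Pr) \<partial>?Ps)"
      by (subst PP.nn_integral_snd[symmetric]) (simp_all cong: measurable_cong_sets)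
    also have "\<dots> = (\<integral>\<^sup>+y. (\<Sum>k\<in>range Q. ennreal (h k y * indicator C (k, y))) \<partial>?Ps)"
    proof (intro nn_integral_cong)
      fix y
      have "(\<integral>\<^sup>+x. indicator C (Q (x + y), y) \<partial>?Pr) =
          (\<Sum>k\<in>range Q. emeasure ?Pr {x\<in>space ?Pr. Q (x + y) = k} * indicator C (k, y))"
        using Q_finite by (intro Pr.nn_integral_finite_valued) auto
      then show "(\<integral>\<^sup>+x. indicator C (Q (x + y), y) \<partial>?Pr) =
          (\<Sum>k\<in>range Q. ennreal (h k y * indicator C (k, y)))"
        by (simp add: h_def quantizer_kernel_def Pr.emeasure_eq_measure ennreal_mult'' ennreal_indicator)
    qed
    also have "\<dots> = (\<Sum>k\<in>range Q. \<integral>\<^sup>+y. h k y * indicator C (k, y) \<partial>?Ps)"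
      by (intro nn_integral_sum) (simp cong: measurable_cong_sets)
    finally show "emeasure M ((\<lambda>\<omega>. (Q (r \<omega> + s \<omega>), s \<omega>)) -` C \<inter> space M) =
        (\<Sum>k\<in>range Q. \<integral>\<^sup>+y. h k y * indicator C (k, y) \<partial>?Ps)" .
  qed (use Q_finite h_bounds in auto)
  show ?thesis by (rule mutual_information_eq) simp
qed

lemma conditional_mutual_information_quantized:
  fixes Q :: "real \<Rightarrow> 'q"
  assumes [measurable]: "r \<in> borel_measurable M" "s \<in> borel_measurable M"
    and indep: "indep_var borel r borel s"
    and Q_finite: "finite (range Q)" and [measurable]: "Q \<in> measurable borel (count_space UNIV)"
  shows "conditional_mutual_information 2 (count_space UNIV) borel borel (\<lambda>\<omega>. Q (r \<omega> + s \<omega>)) r s =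
    (\<integral>y. shannon_entropy (range Q) (\<lambda>k. quantizer_kernel (distr M borel r) Q k y) \<partial>distr M borel s)"
proof -
  let ?h = "quantizer_kernel (distr M borel r) Q"
  have "mutual_information 2 (count_space UNIV) (borel \<Otimes>\<^sub>M borel) (\<lambda>\<omega>. Q (r \<omega> + s \<omega>)) (\<lambda>\<omega>. (r \<omega>, s \<omega>)) =
      - (\<Sum>k\<in>range Q. prob {\<omega>\<in>space M. Q (r \<omega> + s \<omega>) = k} * log 2 (prob {\<omega>\<in>space M. Q (r \<omega> + s \<omega>) = k}))"
    using mutual_information_finite_fun[of 2 "range Q" "\<lambda>v. Q (fst v + snd v)" "borel \<Otimes>\<^sub>M borel" "\<lambda>\<omega>. (r \<omega>, s \<omega>)"]
      Q_finite by simp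
  moreover have "integrable (distr M borel s) (\<lambda>y. ?h k y * log 2 (?h k y))" for k
    using Q_finite by (intro integrable_shannon_entropy_quantizer_kernel(1) prob_space_distr) auto
  then have "(\<integral>y. shannon_entropy (range Q) (\<lambda>k. ?h k y) \<partial>distr M borel s) =
      - (\<Sum>k\<in>range Q. \<integral>y. ?h k y * log 2 (?h k y) \<partial>distr M borel s)"
    unfolding shannon_entropy_def minus_mult_left[symmetric]
    by (subst Bochner_Integration.integral_sum) (auto simp: sum_negf)
  ultimately show ?thesis
    using mutual_information_quantized_noise[OF assms]
    by (simp add: conditional_mutual_information_def)
qed

end

lemma integral_shannon_entropy_quantizer_kernel_le_log:
  assumes P: "prob_space P" "sets P = sets borel" and N: "prob_space N" "sets N = sets borel"
    and Q: "scalar_quantizer Q L"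
  shows "(\<integral>y. shannon_entropy (range Q) (\<lambda>k. quantizer_kernel P Q k y) \<partial>N) \<le> log 2 L"
proof -
  interpret N: prob_space N by (fact N(1))
  note Q' = scalar_quantizerD(1)[OF Q] scalar_quantizer_measurable[OF Q]
  have "(\<integral>y. shannon_entropy (range Q) (\<lambda>k. quantizer_kernel P Q k y) \<partial>N) \<le> (\<integral>y. log 2 L \<partial>N)"
    using P Q' N scalar_quantizerD(2)[OF Q]
    by (intro Bochner_Integration.integral_mono integrable_shannon_entropy_quantizer_kernel(2))
      (auto intro!: shannon_entropy_le_log_card quantizer_kernel_bounds sum_quantizer_kernel)
  then show ?thesis by (simp add: N.prob_space)
qed

lemma integral_shannon_entropy_quantizer_kernel_le_fano:
  assumes P: "prob_space P" "sets P = sets borel" and N: "prob_space N" "sets N = sets borel"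
    and Q: "scalar_quantizer Q L" and L: "2 \<le> L" and g: "0 < g" "g < 1"
  defines "e \<equiv> (\<integral>y. quantizer_error P Q y \<partial>N)"
  shows "(\<integral>y. shannon_entropy (range Q) (\<lambda>k. quantizer_kernel P Q k y) \<partial>N) \<le>
    - (1 - e) * log 2 (1 - g) - e * log 2 (g / (real L - 1))"
proof -
  interpret P: prob_space P by (fact P(1))
  interpret N: prob_space N by (fact N(1))
  note Q' = scalar_quantizerD(1)[OF Q] scalar_quantizer_measurable[OF Q]
  define A where "A = log 2 (1 - g)"
  define B where "B = log 2 (g / (real L - 1))"
  have "integrable N (quantizer_error P Q)"
    by (rule integrable_quantizer_error[OF P Q' N])
  then have "integrable N (\<lambda>y. (A - B) * quantizer_error P Q y - A)"
    by auto
  moreover have "shannon_entropy (range Q) (\<lambda>k. quantizer_kernel P Q k y) \<le> (A - B) * quantizer_error P Q y - A" for y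
    using shannon_entropy_fano[OF Q'(1) rangeI[of Q y] scalar_quantizerD(2)[OF Q] L _ _ g,
        of "\<lambda>k. quantizer_kernel P Q k y"] P Q'
    by (simp add: A_def B_def quantizer_kernel_bounds sum_quantizer_kernel quantizer_kernel_self algebra_simps)
  ultimately have "(\<integral>y. shannon_entropy (range Q) (\<lambda>k. quantizer_kernel P Q k y) \<partial>N) \<le>
      (\<integral>y. (A - B) * quantizer_error P Q y - A \<partial>N)"
    using P Q' N by (intro Bochner_Integration.integral_mono integrable_shannon_entropy_quantizer_kernel(2))
  also have "\<dots> = (A - B) * e - A"
    using \<open>integrable N (quantizer_error P Q)\<close> by (simp add: e_def N.prob_space)
  finally show ?thesis by (simp add: A_def B_def algebra_simps)
qed

lemma integral_quantizer_error_le_erf: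
  assumes P: "prob_space P" "sets P = sets borel"
    and R: "0 \<le> R" "(\<integral>\<^sup>+x. ennreal (x\<^sup>2) \<partial>P) \<le> ennreal R"
    and \<sigma>: "0 < \<sigma>" and Q: "scalar_quantizer Q L" and L: "1 \<le> L"
  shows "(\<integral>y. quantizer_error P Q y \<partial>density lborel (normal_density 0 \<sigma>)) \<le>
    erf ((real L - 1) * sqrt R / 2 / (\<sigma> * sqrt 2))"
proof -
  let ?N = "density lborel (normal_density 0 \<sigma>)"
  have N: "prob_space ?N" "sets ?N = sets borel"
    using \<sigma> by (auto intro: prob_space_normal_density)
  note Q' = scalar_quantizerD(1)[OF Q] scalar_quantizer_measurable[OF Q]
  define a where "a = (real L - 1) * sqrt R / 2"
  have a: "0 \<le> a" using L R by (simp add: a_def)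
  have "ennreal (\<integral>y. quantizer_error P Q y \<partial>?N) = (\<integral>\<^sup>+y. quantizer_error P Q y \<partial>?N)"
    by (intro nn_integral_eq_integral[symmetric] integrable_quantizer_error[OF P Q' N] AE_I2)
      (simp add: quantizer_error_def)
  also have "\<dots> = (\<integral>\<^sup>+x. emeasure ?N {y. Q (x + y) \<noteq> Q y} \<partial>P)"
    by (rule nn_integral_quantizer_error(1)[OF P Q' N])
  also have "\<dots> \<le> emeasure ?N {-a..a}"
    unfolding a_def
    using L emeasure_quantizer_shift_disagree[OF Q] sets_quantizer_shift_disagree[OF Q']
    by (intro nn_integral_normal_shifted_sets_le[OF P \<sigma> R(1) _ R(2)]
        nn_integral_quantizer_error(2)[OF P Q' N]) auto
  also have "\<dots> \<le> ennreal (erf (a / (\<sigma> * sqrt 2)))"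
    by (rule emeasure_normal_Icc_le_erf[OF \<sigma> a])
  finally show ?thesis
    using erf_nonneg[of "a / (\<sigma> * sqrt 2)"] a \<sigma> by (simp add: a_def ennreal_le_iff)
qed

context prob_space
begin

lemma quantized_conditional_mutual_information_le_iota_bar:
  fixes Q :: "real \<Rightarrow> 'q"
  assumes [measurable]: "r \<in> borel_measurable M" and indep: "indep_var borel r borel s"
    and s: "centered_gaussian M s v" and v: "0 < v"
    and R: "0 \<le> R" "(\<integral>\<^sup>+\<omega>. ennreal ((r \<omega>)\<^sup>2) \<partial>M) \<le> ennreal R"
    and Q: "scalar_quantizer Q L" and L: "2 \<le> L"
  shows "conditional_mutual_information 2 (count_space UNIV) borel borel (\<lambda>\<omega>. Q (r \<omega> + s \<omega>)) r s
    \<le> iota_bar L (R / v)"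
proof -
  let ?Pr = "distr M borel r" and ?Ps = "distr M borel s"
  have [measurable]: "s \<in> borel_measurable M" and Ps: "?Ps = density lborel (normal_density 0 (sqrt v))"
    using s v by (auto simp: centered_gaussian_def)
  have Pr: "prob_space ?Pr" "sets ?Pr = sets borel" and Ps': "prob_space ?Ps" "sets ?Ps = sets borel"
    by (auto intro: prob_space_distr)
  define e where "e = (\<integral>y. quantizer_error ?Pr Q y \<partial>?Ps)"
  have "e \<le> erf ((real L - 1) * sqrt R / 2 / (sqrt v * sqrt 2))"
    unfolding e_def Ps using R v L
    by (intro integral_quantizer_error_le_erf[OF Pr _ _ _ Q]) (auto simp: nn_integral_distr)
  also have "\<dots> \<le> erf ((real L - 1) * sqrt (R / v) / sqrt 2)"
  proof (rule erf_mono)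
    define u where "u = (real L - 1) * sqrt (R / v) / sqrt 2"
    have "(real L - 1) * sqrt R / 2 / (sqrt v * sqrt 2) = u / 2"
      using v by (simp add: u_def real_sqrt_divide)
    moreover have "0 \<le> u"
      using R v L by (simp add: u_def)
    ultimately show "0 \<le> (real L - 1) * sqrt R / 2 / (sqrt v * sqrt 2)"
      and "(real L - 1) * sqrt R / 2 / (sqrt v * sqrt 2) \<le> (real L - 1) * sqrt (R / v) / sqrt 2"
      using u_def by linarith+
  qed
  also have "\<dots> \<le> f_bar L (R / v)"
    using R v L by (intro erf_le_f_bar) auto
  finally have e_le: "e \<le> f_bar L (R / v)" .
  have e_nonneg: "0 \<le> e"
    unfolding e_def by (simp add: quantizer_error_def)
  have CMI: "conditional_mutual_information 2 (count_space UNIV) borel borel (\<lambda>\<omega>. Q (r \<omega> + s \<omega>)) r s =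
      (\<integral>y. shannon_entropy (range Q) (\<lambda>k. quantizer_kernel ?Pr Q k y) \<partial>?Ps)"
    using indep scalar_quantizerD(1)[OF Q] scalar_quantizer_measurable[OF Q]
    by (intro conditional_mutual_information_quantized) auto
  show ?thesis
    unfolding CMI iota_bar_def
    using L by (intro fano_bound_optimize[OF L e_nonneg e_le]
        integral_shannon_entropy_quantizer_kernel_le_log[OF Pr Ps' Q]
        integral_shannon_entropy_quantizer_kernel_le_fano[OF Pr Ps' Q, folded e_def]) auto
qed

lemma centered_gaussian_add:
  assumes indep: "indep_var borel z borel n"
    and z: "centered_gaussian M z Zc" "0 \<le> Zc" and n: "centered_gaussian M n N0" "0 < N0"
  shows "centered_gaussian M (\<lambda>\<omega>. z \<omega> + n \<omega>) (Zc + N0)"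
proof -
  have [measurable]: "z \<in> borel_measurable M" "n \<in> borel_measurable M"
    using z n by (auto simp: centered_gaussian_def)
  have dn: "distr M borel n = density lborel (normal_density 0 (sqrt N0))"
    using n by (simp add: centered_gaussian_def)
  have "distr M borel (\<lambda>\<omega>. z \<omega> + n \<omega>) = density lborel (normal_density 0 (sqrt (Zc + N0)))"
  proof (cases "Zc = 0")
    case True
    then have "emeasure (distr M borel z) (UNIV - {0}) = 0"
      using z by (simp add: centered_gaussian_def)
    then have "z -` (UNIV - {0}) \<inter> space M \<in> null_sets M"
      by (subst (asm) emeasure_distr) auto
    then have "AE \<omega> in M. z \<omega> = 0"
      by (rule AE_I') auto
    then have "distr M borel (\<lambda>\<omega>. z \<omega> + n \<omega>) = distr M borel n"
      by (intro distr_cong_AE) auto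
    then show ?thesis using dn True by simp
  next
    case False
    then have "distributed M lborel z (normal_density 0 (sqrt Zc))"
      using z by (simp add: centered_gaussian_def distributed_def distr_cong[OF refl sets_lborel])
    moreover have "distributed M lborel n (normal_density 0 (sqrt N0))"
      using dn by (simp add: distributed_def distr_cong[OF refl sets_lborel])
    ultimately have "distributed M lborel (\<lambda>x. z x + n x) (normal_density (0 + 0) (sqrt ((sqrt Zc)\<^sup>2 + (sqrt N0)\<^sup>2)))"
      using False z(2) n(2) by (intro add_indep_normal[OF indep]) auto
    then show ?thesis
      using False z(2) n(2) by (simp add: distributed_def distr_cong[OF refl sets_lborel])
  qed
  then show ?thesis
    using z n by (simp add: centered_gaussian_def)
qed

lemma indep_vars_three_sum:
  fixes r z n :: "'a \<Rightarrow> real"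
  assumes "indep_vars (\<lambda>_. borel) (\<lambda>i::nat. if i = 0 then r else if i = 1 then z else n) {0, 1, 2}"
  shows "indep_var borel r borel (\<lambda>\<omega>. z \<omega> + n \<omega>)" and "indep_var borel z borel n"
proof -
  let ?X = "\<lambda>i::nat. if i = 0 then r else if i = 1 then z else n"
  have "indep_var borel (?X 0) borel (\<lambda>\<omega>. \<Sum>i\<in>{1, 2}. ?X i \<omega>)"
    using assms by (intro indep_vars_sum) auto
  then show "indep_var borel r borel (\<lambda>\<omega>. z \<omega> + n \<omega>)" by simp
  have "indep_vars (\<lambda>_. borel) ?X {1, 2}"
    by (rule indep_vars_subset[OF assms]) auto
  then have "indep_var borel (?X 1) borel (\<lambda>\<omega>. \<Sum>i\<in>{2}. ?X i \<omega>)"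
    by (intro indep_vars_sum) auto
  then show "indep_var borel z borel n" by simp
qed

end

theorem theorem2:
  fixes M :: "'a measure" and r z n :: "'a \<Rightarrow> real"
    and Q :: "real \<Rightarrow> 'q" and L :: nat and Zc N0 Rc :: real
  assumes "prob_space M"
    and "r \<in> borel_measurable M"
    and "prob_space.indep_vars M (\<lambda>_. borel)
           (\<lambda>i::nat. if i = 0 then r else if i = 1 then z else n) {0, 1, 2}"
    and "Zc \<ge> 0" and "N0 > 0"
    and "centered_gaussian M z Zc"
    and "centered_gaussian M n N0"
    and "Rc \<ge> 0"
    and "(\<integral>\<^sup>+ \<omega>. ennreal ((r \<omega>)\<^sup>2) \<partial>M) \<le> ennreal Rc"
    and "L \<ge> 2"
    and "scalar_quantizer Q L"
  shows "prob_space.conditional_mutual_information M 2 (count_space UNIV) borel borel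
           (\<lambda>\<omega>. Q (r \<omega> + z \<omega> + n \<omega>)) r (\<lambda>\<omega>. z \<omega> + n \<omega>)
         \<le> iota_bar L (Rc / (Zc + N0))"
proof -
  interpret prob_space M by fact
  note indep = indep_vars_three_sum[OF assms(3)]
  have "centered_gaussian M (\<lambda>\<omega>. z \<omega> + n \<omega>) (Zc + N0)"
    using assms(4-7) by (intro centered_gaussian_add indep(2))
  then have "conditional_mutual_information 2 (count_space UNIV) borel borel
      (\<lambda>\<omega>. Q (r \<omega> + (z \<omega> + n \<omega>))) r (\<lambda>\<omega>. z \<omega> + n \<omega>) \<le> iota_bar L (Rc / (Zc + N0))"
    using assms(2,4,5,8-11) by (intro quantized_conditional_mutual_information_le_iota_bar indep(1)) auto
  then show ?thesis by (simp add: add.assoc)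
qed

end
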